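(* Let $U\colon[0,1]^2\to[0,1]$ be a uninorm with neutral element $e\in(0,1)$ such that $U\in\mathcal U$ and $U\in\mathcal N_{\min}$ (respectively $U\in\mathcal N_{\max}$). If $U$ has no idempotent points in $(e,1)$ (respectively in $(0,e)$), then $U$ is irreducible with respect to the ordinal sum construction.
   Context: A uninorm is a commutative, associative binary operation on $[0,1]$, non-decreasing in each variable, with a neutral element; "broad sense" allows neutral element $e\in[0,1]$ (t-norm if $e=1$, t-conorm if $e=0$), and a proper uninorm has $e\in(0,1)$. Conjunctive: $U(1,0)=0$; disjunctive: $U(1,0)=1$. Underlying t-norm $T_U(x,y)=U(ex,ey)/e$, underlying t-conorm $C_U(x,y)=(U(e+(1-e)x,e+(1-e)y)-e)/(1-e)$. $\mathcal U$: uninorms with continuous $T_U$ and $C_U$. $\mathcal N$: uninorms $V$ with $V(x,0)=0$ for all $x\in[0,1)$ and $V(x,1)=1$ for all $x\in(0,1]$. $\mathcal U_{\min}$ ($\mathcal U_{\max}$): uninorms $U_1$ with neutral element $e_1$ such that $U_1(x,y)=\min(x,y)$ (resp. $\max(x,y)$) for all $(x,y)\in[0,1]^2\setminus([0,e_1]^2\cup[e_1,1]^2)$. $\mathcal N_{\min}$ ($\mathcal N_{\max}$): uninorms $U\in\mathcal N$ for which there is $U_1\in\mathcal U_{\min}$ ($U_1\in\mathcal U_{\max}$) with $U=U_1$ on $(0,1)^2$. An idempotent point of $U$ is $x$ with $U(x,x)=x$. Ordinal sum construction: transformation: for a uninorm $W$ with neutral $e'$, $0\le a\le b<c\le d\le1$,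 $v\in[b,c]$: $f(x)=a+(b-a)x/e'$ on $[0,e')$, $f(e')=v$, $f(x)=d-(1-x)(d-c)/(1-e')$ on $(e',1]$; $W^{a,b,c,d}_v(x,y)=f(W(f^{-1}(x),f^{-1}(y)))$ on $([a,b)\cup\{v\}\cup(c,d])^2$ (if $a=b$, resp. $c=d$, only the part on $[e',1]^2$, resp. $[0,e']^2$, is transported). Data: $K$ countable; $((a_k,b_k))_k$ pairwise disjoint open (possibly empty) subintervals of $[0,e]$ with $\bigcup_k[a_k,b_k]=[0,e]$, $((c_k,d_k))_k$ likewise in $[e,1]$ with $\bigcup_k[c_k,d_k]=[e,1]$; $b_k\le a_i\iff c_k\ge d_i$ for all $i,k$; $U_k$ a proper uninorm if both intervals non-empty, a t-norm or proper uninorm if $(a_k,b_k)\ne\emptyset$, a t-conorm or proper uninorm if $(c_k,d_k)\ne\emptyset$; if both are empty there is no $k_1\ne k$ with $a_k=b_k=a_{k_1}=b_{k_1}$, $c_k=d_k=c_{k_1}=d_{k_1}$. $B=\{b_k\}\setminus\{a_k\}$, $C=\{c_k\}\setminus\{d_k\}$, $n(b_k)=b_k$ if $U_k(1,0)=0$ else $c_k$; $v_k=c_k$ (resp. $b_k$) if some $i$ has $b_k=a_i$ with $U_i$ disjunctive (resp. conjunctive), $v_k=n(b_k)$ if $b_k\in B,c_k\in C$, $v_k=b_k$ if $b_k\in B,c_k\notin C$, $v_k=c_k$ if $b_k\notin B,c_k\in C$. The ordinal sum $(\langle a_k,b_k,c_k,d_k,U_k\rangle\mid k\in K)^e$ is: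 $y$ if $x=e$; $x$ if $y=e$; $(U_k)^{a_k,b_k,c_k,d_k}_{v_k}(x,y)$ on $([a_k,b_k)\cup(c_k,d_k])^2$; $x$ if $y\in[b_k,c_k]$, $x\in[a_k,d_k]\setminus[b_k,c_k]$; $y$ symmetrically; $\min(x,y)$ if $(x,y)\in[b_k,c_k]^2\setminus((b_k,c_k)^2\cup\{(b_k,c_k),(c_k,b_k)\})$, $b_k\in B,c_k\in C$, $x+y<b_k+c_k$; $\max(x,y)$ likewise with $x+y>b_k+c_k$; $n(b_k)$ at $(b_k,c_k),(c_k,b_k)$ when $b_k\in B,c_k\in C$; $\min(x,y)$ on $\{b_k\}\times[b_k,c_k]\cup[b_k,c_k]\times\{b_k\}$ when $b_k\in B,c_k\notin C$; $\max(x,y)$ on $\{c_k\}\times[b_k,c_k]\cup[b_k,c_k]\times\{c_k\}$ when $b_k\notin B,c_k\in C$. A summand is empty if $a_k=b_k$ and $c_k=d_k$. A uninorm $U$ with neutral element $e$ is irreducible with respect to the ordinal sum construction if it can be expressed only as a trivial ordinal sum, i.e., in every representation of $U$ as such an ordinal sum the only non-empty summand is defined on $([0,e)\cup(e,1])^2$, i.e. on all of $[0,1]^2$. *)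

theory Defs
  imports "HOL-Analysis.Analysis"
begin

definition uninorm :: "(real \<Rightarrow> real \<Rightarrow> real) \<Rightarrow> real \<Rightarrow> bool" where
  "uninorm U e \<longleftrightarrow>
     e \<in> {0..1} \<and>
     (\<forall>x\<in>{0..1}. \<forall>y\<in>{0..1}. U x y \<in> {0..1}) \<and>
     (\<forall>x\<in>{0..1}. \<forall>y\<in>{0..1}. U x y = U y x) \<and>
     (\<forall>x\<in>{0..1}. \<forall>y\<in>{0..1}. \<forall>z\<in>{0..1}. U (U x y) z = U x (U y z)) \<and>
     (\<forall>x\<in>{0..1}. \<forall>y\<in>{0..1}. \<forall>z\<in>{0..1}. x \<le> y \<longrightarrow> U x z \<le> U y z) \<and>
     (\<forall>x\<in>{0..1}. U e x = x)"

definition proper_uninorm :: "(real \<Rightarrow> real \<Rightarrow> real) \<Rightarrow> real \<Rightarrow> bool" where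
  "proper_uninorm U e \<longleftrightarrow> uninorm U e \<and> 0 < e \<and> e < 1"

definition conjunctive :: "(real \<Rightarrow> real \<Rightarrow> real) \<Rightarrow> bool" where
  "conjunctive U \<longleftrightarrow> U 1 0 = 0"

definition disjunctive :: "(real \<Rightarrow> real \<Rightarrow> real) \<Rightarrow> bool" where
  "disjunctive U \<longleftrightarrow> U 1 0 = 1"

definition underlying_tnorm :: "(real \<Rightarrow> real \<Rightarrow> real) \<Rightarrow> real \<Rightarrow> real \<Rightarrow> real \<Rightarrow> real" where
  "underlying_tnorm U e x y = U (e * x) (e * y) / e"

definition underlying_tconorm :: "(real \<Rightarrow> real \<Rightarrow> real) \<Rightarrow> real \<Rightarrow> real \<Rightarrow> real \<Rightarrow> real" where
  "underlying_tconorm U e x y = (U (e + (1 - e) * x) (e + (1 - e) * y) - e) / (1 - e)"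

definition in_class_U :: "(real \<Rightarrow> real \<Rightarrow> real) \<Rightarrow> real \<Rightarrow> bool" where
  "in_class_U U e \<longleftrightarrow> uninorm U e \<and>
     continuous_on ({0..1} \<times> {0..1}) (\<lambda>(x, y). underlying_tnorm U e x y) \<and>
     continuous_on ({0..1} \<times> {0..1}) (\<lambda>(x, y). underlying_tconorm U e x y)"

definition in_class_N :: "(real \<Rightarrow> real \<Rightarrow> real) \<Rightarrow> bool" where
  "in_class_N V \<longleftrightarrow> (\<exists>e. uninorm V e) \<and>
     (\<forall>x. 0 \<le> x \<and> x < 1 \<longrightarrow> V x 0 = 0) \<and>
     (\<forall>x. 0 < x \<and> x \<le> 1 \<longrightarrow> V x 1 = 1)"

definition in_class_Umin :: "(real \<Rightarrow> real \<Rightarrow> real) \<Rightarrow> bool" where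
  "in_class_Umin U1 \<longleftrightarrow> (\<exists>e1. uninorm U1 e1 \<and>
     (\<forall>x\<in>{0..1}. \<forall>y\<in>{0..1}.
        \<not> (x \<le> e1 \<and> y \<le> e1) \<and> \<not> (e1 \<le> x \<and> e1 \<le> y) \<longrightarrow> U1 x y = min x y))"

definition in_class_Umax :: "(real \<Rightarrow> real \<Rightarrow> real) \<Rightarrow> bool" where
  "in_class_Umax U1 \<longleftrightarrow> (\<exists>e1. uninorm U1 e1 \<and>
     (\<forall>x\<in>{0..1}. \<forall>y\<in>{0..1}.
        \<not> (x \<le> e1 \<and> y \<le> e1) \<and> \<not> (e1 \<le> x \<and> e1 \<le> y) \<longrightarrow> U1 x y = max x y))"

definition in_class_Nmin :: "(real \<Rightarrow> real \<Rightarrow> real) \<Rightarrow> bool" where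
  "in_class_Nmin U \<longleftrightarrow> in_class_N U \<and>
     (\<exists>U1. in_class_Umin U1 \<and> (\<forall>x\<in>{0<..<1}. \<forall>y\<in>{0<..<1}. U x y = U1 x y))"

definition in_class_Nmax :: "(real \<Rightarrow> real \<Rightarrow> real) \<Rightarrow> bool" where
  "in_class_Nmax U \<longleftrightarrow> in_class_N U \<and>
     (\<exists>U1. in_class_Umax U1 \<and> (\<forall>x\<in>{0<..<1}. \<forall>y\<in>{0<..<1}. U x y = U1 x y))"

definition idempotent_point :: "(real \<Rightarrow> real \<Rightarrow> real) \<Rightarrow> real \<Rightarrow> bool" where
  "idempotent_point U x \<longleftrightarrow> U x x = x"

definition tr_f :: "real \<Rightarrow> real \<Rightarrow> real \<Rightarrow> real \<Rightarrow> real \<Rightarrow> real \<Rightarrow> real \<Rightarrow> real" where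
  "tr_f e' a b c d v z =
     (if z < e' then a + (b - a) * z / e'
      else if z = e' then v
      else d - (1 - z) * (d - c) / (1 - e'))"

definition tr_finv :: "real \<Rightarrow> real \<Rightarrow> real \<Rightarrow> real \<Rightarrow> real \<Rightarrow> real \<Rightarrow> real \<Rightarrow> real" where
  "tr_finv e' a b c d v x =
     (if a \<le> x \<and> x < b then e' * (x - a) / (b - a)
      else if x = v then e'
      else 1 - (d - x) * (1 - e') / (d - c))"

definition transform ::
  "(real \<Rightarrow> real \<Rightarrow> real) \<Rightarrow> real \<Rightarrow> real \<Rightarrow> real \<Rightarrow> real \<Rightarrow> real \<Rightarrow> real \<Rightarrow> real \<Rightarrow> real \<Rightarrow> real" where
  "transform W e' a b c d v x y =
     tr_f e' a b c d v (W (tr_finv e' a b c d v x) (tr_finv e' a b c d v y))"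

text \<open>The countable
  index set \<open>K\<close> is represented as a set of natural numbers; \<open>Uk k\<close> is the
  \<open>k\<close>-th summand, a uninorm in the broad sense with neutral element \<open>ek k\<close>.\<close>

definition ordsum_data ::
  "real \<Rightarrow> nat set \<Rightarrow> (nat \<Rightarrow> real) \<Rightarrow> (nat \<Rightarrow> real) \<Rightarrow> (nat \<Rightarrow> real) \<Rightarrow> (nat \<Rightarrow> real)
   \<Rightarrow> (nat \<Rightarrow> real \<Rightarrow> real \<Rightarrow> real) \<Rightarrow> (nat \<Rightarrow> real) \<Rightarrow> bool" where
  "ordsum_data e K a b c d Uk ek \<longleftrightarrow>
     (\<forall>k\<in>K. 0 \<le> a k \<and> a k \<le> b k \<and> b k \<le> e \<and> e \<le> c k \<and> c k \<le> d k \<and> d k \<le> 1) \<and>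
     (\<forall>i\<in>K. \<forall>k\<in>K. i \<noteq> k \<longrightarrow> {a i<..<b i} \<inter> {a k<..<b k} = {}) \<and>
     (\<forall>i\<in>K. \<forall>k\<in>K. i \<noteq> k \<longrightarrow> {c i<..<d i} \<inter> {c k<..<d k} = {}) \<and>
     (\<Union>k\<in>K. {a k..b k}) = {0..e} \<and>
     (\<Union>k\<in>K. {c k..d k}) = {e..1} \<and>
     (\<forall>i\<in>K. \<forall>k\<in>K. b k \<le> a i \<longleftrightarrow> d i \<le> c k) \<and>
     (\<forall>k\<in>K. uninorm (Uk k) (ek k)) \<and>
     (\<forall>k\<in>K. a k < b k \<and> c k < d k \<longrightarrow> proper_uninorm (Uk k) (ek k)) \<and>
     (\<forall>k\<in>K. a k < b k \<longrightarrow> ek k = 1 \<or> proper_uninorm (Uk k) (ek k)) \<and>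
     (\<forall>k\<in>K. c k < d k \<longrightarrow> ek k = 0 \<or> proper_uninorm (Uk k) (ek k)) \<and>
     (\<forall>k\<in>K. a k = b k \<and> c k = d k \<longrightarrow>
        \<not> (\<exists>k1\<in>K. k1 \<noteq> k \<and> a k1 = b k1 \<and> a k1 = a k \<and> c k1 = d k1 \<and> c k1 = c k))"

definition os_B :: "nat set \<Rightarrow> (nat \<Rightarrow> real) \<Rightarrow> (nat \<Rightarrow> real) \<Rightarrow> real set" where
  "os_B K a b = b ` K - a ` K"

definition os_C :: "nat set \<Rightarrow> (nat \<Rightarrow> real) \<Rightarrow> (nat \<Rightarrow> real) \<Rightarrow> real set" where
  "os_C K c d = c ` K - d ` K"

definition os_n :: "(nat \<Rightarrow> real) \<Rightarrow> (nat \<Rightarrow> real) \<Rightarrow> (nat \<Rightarrow> real \<Rightarrow> real \<Rightarrow> real) \<Rightarrow> nat \<Rightarrow> real" where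
  "os_n b c Uk k = (if Uk k 1 0 = 0 then b k else c k)"

definition os_v ::
  "nat set \<Rightarrow> (nat \<Rightarrow> real) \<Rightarrow> (nat \<Rightarrow> real) \<Rightarrow> (nat \<Rightarrow> real) \<Rightarrow> (nat \<Rightarrow> real)
   \<Rightarrow> (nat \<Rightarrow> real \<Rightarrow> real \<Rightarrow> real) \<Rightarrow> nat \<Rightarrow> real" where
  "os_v K a b c d Uk k =
     (if \<exists>i\<in>K. b k = a i \<and> disjunctive (Uk i) then c k
      else if \<exists>i\<in>K. b k = a i \<and> conjunctive (Uk i) then b k
      else if b k \<in> os_B K a b \<and> c k \<in> os_C K c d then os_n b c Uk k
      else if b k \<in> os_B K a b \<and> c k \<notin> os_C K c d then b k
      else c k)"

definition is_ordinal_sum ::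
  "(real \<Rightarrow> real \<Rightarrow> real) \<Rightarrow> real \<Rightarrow> nat set \<Rightarrow> (nat \<Rightarrow> real) \<Rightarrow> (nat \<Rightarrow> real) \<Rightarrow> (nat \<Rightarrow> real)
   \<Rightarrow> (nat \<Rightarrow> real) \<Rightarrow> (nat \<Rightarrow> real \<Rightarrow> real \<Rightarrow> real) \<Rightarrow> (nat \<Rightarrow> real) \<Rightarrow> bool" where
  "is_ordinal_sum U e K a b c d Uk ek \<longleftrightarrow>
     (let B = os_B K a b; C = os_C K c d in
     (\<forall>y\<in>{0..1}. U e y = y) \<and>
     (\<forall>x\<in>{0..1}. U x e = x) \<and>
     (\<forall>k\<in>K. \<forall>x\<in>{a k..<b k} \<union> {c k<..d k}. \<forall>y\<in>{a k..<b k} \<union> {c k<..d k}.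
        U x y = transform (Uk k) (ek k) (a k) (b k) (c k) (d k) (os_v K a b c d Uk k) x y) \<and>
     (\<forall>k\<in>K. \<forall>x\<in>{a k..d k} - {b k..c k}. \<forall>y\<in>{b k..c k}. U x y = x \<and> U y x = x) \<and>
     (\<forall>k\<in>K. b k \<in> B \<and> c k \<in> C \<longrightarrow>
        (\<forall>x\<in>{b k..c k}. \<forall>y\<in>{b k..c k}.
           (x, y) \<notin> {b k<..<c k} \<times> {b k<..<c k} \<and> (x, y) \<noteq> (b k, c k) \<and> (x, y) \<noteq> (c k, b k) \<longrightarrow>
           (x + y < b k + c k \<longrightarrow> U x y = min x y) \<and>
           (x + y > b k + c k \<longrightarrow> U x y = max x y))) \<and>
     (\<forall>k\<in>K. b k \<in> B \<and> c k \<in> C \<longrightarrow>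
        U (b k) (c k) = os_n b c Uk k \<and> U (c k) (b k) = os_n b c Uk k) \<and>
     (\<forall>k\<in>K. b k \<in> B \<and> c k \<notin> C \<longrightarrow>
        (\<forall>y\<in>{b k..c k}. U (b k) y = min (b k) y \<and> U y (b k) = min y (b k))) \<and>
     (\<forall>k\<in>K. b k \<notin> B \<and> c k \<in> C \<longrightarrow>
        (\<forall>y\<in>{b k..c k}. U (c k) y = max (c k) y \<and> U y (c k) = max y (c k))))"

text \<open>Irreducibility: in every representation of \<open>U\<close> as an ordinal sum, every non-empty
  summand is defined on all of \<open>[0,1]\<^sup>2\<close>, i.e. has \<open>a_k = 0, b_k = c_k = e, d_k = 1\<close>.\<close>

definition irreducible_os :: "(real \<Rightarrow> real \<Rightarrow> real) \<Rightarrow> real \<Rightarrow> bool" where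
  "irreducible_os U e \<longleftrightarrow>
     (\<forall>K a b c d Uk ek. ordsum_data e K a b c d Uk ek \<and> is_ordinal_sum U e K a b c d Uk ek \<longrightarrow>
        (\<forall>k\<in>K. \<not> (a k = b k \<and> c k = d k) \<longrightarrow> a k = 0 \<and> b k = e \<and> c k = e \<and> d k = 1))"

end

theory Submission
  imports Defs
begin

text \<open>
  For \<open>U \<in> \<N>\<^sub>m\<^sub>i\<^sub>n\<close> we have \<open>U y x = x\<close> whenever \<open>x < e < y\<close>, while the ordinal sum
  equations make the middle block \<open>[b\<^sub>k, c\<^sub>k]\<close> of every summand neutral on its outer part
  \<open>[a\<^sub>k, d\<^sub>k] - [b\<^sub>k, c\<^sub>k]\<close>. Comparing the two forces \<open>b\<^sub>k = e\<close> for every summand with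
  \<open>c\<^sub>k < d\<^sub>k\<close>; also \<open>c\<^sub>k = e\<close>, since otherwise continuity of the underlying t-conorm would
  make \<open>c\<^sub>k\<close> an idempotent point in \<open>(e, 1)\<close>; and \<open>U x 1 = 1\<close> forbids \<open>c\<^sub>k = 1\<close> when
  \<open>a\<^sub>k < b\<^sub>k\<close>. The intervals have disjoint interiors and cover \<open>[0, e]\<close> and \<open>[e, 1]\<close>, while
  degenerate intervals cover only countably many points; with the nesting condition this
  leaves a single non-empty summand, and it lives on all of \<open>[0, 1]\<^sup>2\<close>. The \<open>\<N>\<^sub>m\<^sub>a\<^sub>x\<close> case
  is the mirror image under \<open>x \<mapsto> 1 - x\<close>.
\<close>

lemma open_intervals_disjoint_cases:
  fixes p q r s :: real
  assumes "{p<..<q} \<inter> {r<..<s} = {}" "p < q" "r < s"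
  shows "q \<le> r \<or> s \<le> p"
proof (rule ccontr)
  assume "\<not> ?thesis"
  then have "(max p r + min q s) / 2 \<in> {p<..<q} \<inter> {r<..<s}"
    using assms(2,3) by auto
  then show False
    using assms(1) by blast
qed

lemma countable_interval_cover_nondegenerate:
  fixes l r :: "'i \<Rightarrow> real"
  assumes "countable K" "p < q" "{p<..<q} \<subseteq> (\<Union>k\<in>K. {l k..r k})"
  obtains k where "k \<in> K" "l k < r k" "{l k..r k} \<inter> {p<..<q} \<noteq> {}"
proof -
  have "{p<..<q} \<subseteq> l ` K"
    if none: "\<And>k. k \<in> K \<Longrightarrow> l k < r k \<Longrightarrow> {l k..r k} \<inter> {p<..<q} = {}"
  proof
    fix s assume s: "s \<in> {p<..<q}"
    then obtain k where k: "k \<in> K" "s \<in> {l k..r k}"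
      using assms(3) by blast
    then have "\<not> l k < r k"
      using none s by blast
    then show "s \<in> l ` K"
      using k by force
  qed
  then show thesis
    using that assms(1,2) uncountable_open_interval countable_subset countable_image by metis
qed

lemma interval_cover_single_nondegenerate:
  fixes l r :: "'i \<Rightarrow> real"
  assumes K: "countable K" and cover: "{p..q} \<subseteq> (\<Union>k\<in>K. {l k..r k})"
    and j: "j \<in> K" "p \<le> l j" "l j \<le> r j" "r j \<le> q"
    and unique: "\<And>k. k \<in> K \<Longrightarrow> l k < r k \<Longrightarrow> k = j"
  shows "l j = p \<and> r j = q"
proof -
  have no_gap: False
    if gap: "p' < q'" "{p'<..<q'} \<subseteq> {p..q}" "{l j..r j} \<inter> {p'<..<q'} = {}" for p' q'
  proof -
    obtain k where "k \<in> K" "l k < r k" "{l k..r k} \<inter> {p'<..<q'} \<noteq> {}"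
      using countable_interval_cover_nondegenerate[OF K gap(1)] gap(2) cover by blast
    with unique gap(3) show False by blast
  qed
  have "\<not> p < l j"
    by (intro notI no_gap[of p "l j"]) (use j in auto)
  moreover have "\<not> r j < q"
    by (intro notI no_gap[of "r j" q]) (use j in auto)
  ultimately show ?thesis
    using j by linarith
qed

locale ordsum_partition =
  fixes e :: real and K :: "nat set" and a b c d :: "nat \<Rightarrow> real"
  assumes bounds:
      "\<And>k. k \<in> K \<Longrightarrow> 0 \<le> a k \<and> a k \<le> b k \<and> b k \<le> e \<and> e \<le> c k \<and> c k \<le> d k \<and> d k \<le> 1"
    and disjoint_ab:
      "\<And>i k. i \<in> K \<Longrightarrow> k \<in> K \<Longrightarrow> i \<noteq> k \<Longrightarrow> {a i<..<b i} \<inter> {a k<..<b k} = {}"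
    and disjoint_cd:
      "\<And>i k. i \<in> K \<Longrightarrow> k \<in> K \<Longrightarrow> i \<noteq> k \<Longrightarrow> {c i<..<d i} \<inter> {c k<..<d k} = {}"
    and cover_ab: "(\<Union>k\<in>K. {a k..b k}) = {0..e}"
    and cover_cd: "(\<Union>k\<in>K. {c k..d k}) = {e..1}"
    and nested: "\<And>i k. i \<in> K \<Longrightarrow> k \<in> K \<Longrightarrow> b k \<le> a i \<longleftrightarrow> d i \<le> c k"

lemma ordsum_data_partition:
  "ordsum_data e K a b c d Uk ek \<Longrightarrow> ordsum_partition e K a b c d"
  unfolding ordsum_data_def ordsum_partition_def by (elim conjE) (intro conjI; simp)

lemma reflect_interval_cover:
  fixes l r :: "'i \<Rightarrow> real"
  assumes "(\<Union>k\<in>K. {l k..r k}) = {p..q}"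
  shows "(\<Union>k\<in>K. {1 - r k..1 - l k}) = {1 - q..1 - p}"
proof (intro set_eqI)
  fix x :: real
  have reflect: "x \<in> {1 - r k..1 - l k} \<longleftrightarrow> 1 - x \<in> {l k..r k}" for k
    by auto
  have "x \<in> (\<Union>k\<in>K. {1 - r k..1 - l k}) \<longleftrightarrow> 1 - x \<in> (\<Union>k\<in>K. {l k..r k})"
    by (simp only: UN_iff reflect)
  also have "\<dots> \<longleftrightarrow> x \<in> {1 - q..1 - p}"
    unfolding assms by auto
  finally show "x \<in> (\<Union>k\<in>K. {1 - r k..1 - l k}) \<longleftrightarrow> x \<in> {1 - q..1 - p}" .
qed

lemma reflect_disjoint_open_intervals:
  fixes p q r s :: real
  assumes "{p<..<q} \<inter> {r<..<s} = {}"
  shows "{1 - q<..<1 - p} \<inter> {1 - s<..<1 - r} = {}"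
proof (intro equals0I)
  fix x assume "x \<in> {1 - q<..<1 - p} \<inter> {1 - s<..<1 - r}"
  then have "1 - x \<in> {p<..<q} \<inter> {r<..<s}"
    by auto
  then show False
    using assms by blast
qed

lemma (in ordsum_partition) reflect:
  "ordsum_partition (1 - e) K (\<lambda>k. 1 - d k) (\<lambda>k. 1 - c k) (\<lambda>k. 1 - b k) (\<lambda>k. 1 - a k)"
proof
  show "0 \<le> 1 - d k \<and> 1 - d k \<le> 1 - c k \<and> 1 - c k \<le> 1 - e \<and>
      1 - e \<le> 1 - b k \<and> 1 - b k \<le> 1 - a k \<and> 1 - a k \<le> 1" if "k \<in> K" for k
    using bounds[OF that] by linarith
  show "{1 - d i<..<1 - c i} \<inter> {1 - d k<..<1 - c k} = {}" if "i \<in> K" "k \<in> K" "i \<noteq> k" for i k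
    using disjoint_cd[OF that] by (rule reflect_disjoint_open_intervals)
  show "{1 - b i<..<1 - a i} \<inter> {1 - b k<..<1 - a k} = {}" if "i \<in> K" "k \<in> K" "i \<noteq> k" for i k
    using disjoint_ab[OF that] by (rule reflect_disjoint_open_intervals)
  show "(\<Union>k\<in>K. {1 - d k..1 - c k}) = {0..1 - e}"
    using reflect_interval_cover[OF cover_cd] by simp
  show "(\<Union>k\<in>K. {1 - b k..1 - a k}) = {1 - e..1}"
    using reflect_interval_cover[OF cover_ab] by simp
  show "1 - c k \<le> 1 - d i \<longleftrightarrow> 1 - a i \<le> 1 - b k" if "i \<in> K" "k \<in> K" for i k
    using nested[OF that] by linarith
qed

lemma (in ordsum_partition) single_summand_if_right_central:
  assumes e: "0 < e" "e < 1"
    and right_central: "\<And>i. i \<in> K \<Longrightarrow> c i < d i \<Longrightarrow> b i = e \<and> c i = e"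
    and left_below_top: "\<And>i. i \<in> K \<Longrightarrow> a i < b i \<Longrightarrow> c i < 1"
    and k: "k \<in> K" "\<not> (a k = b k \<and> c k = d k)"
  shows "a k = 0 \<and> b k = e \<and> c k = e \<and> d k = 1"
proof -
  have "{e<..<1} \<subseteq> (\<Union>k\<in>K. {c k..d k})"
    using cover_cd by auto
  then obtain j where j: "j \<in> K" "c j < d j"
    using countable_interval_cover_nondegenerate[OF countableI_type \<open>e < 1\<close>] by blast
  have bj: "b j = e" "c j = e"
    using right_central j by auto
  have right_unique: "i = j" if i: "i \<in> K" "c i < d i" for i
  proof (rule ccontr)
    assume "i \<noteq> j"
    then have "d i \<le> c j \<or> d j \<le> c i"
      using open_intervals_disjoint_cases[OF disjoint_cd[OF i(1) j(1)] i(2) j(2)] by blast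
    then show False
      using right_central[OF i] bj i(2) j(2) by linarith
  qed
  have j_right: "c j = e \<and> d j = 1"
  proof (rule interval_cover_single_nondegenerate[OF countableI_type _ j(1) _ _ _ right_unique])
    show "{e..1} \<subseteq> (\<Union>k\<in>K. {c k..d k})"
      using cover_cd by simp
  qed (use bounds[OF j(1)] in auto)
  have left_unique: "i = j" if i: "i \<in> K" "a i < b i" for i
  proof (rule ccontr)
    assume "i \<noteq> j"
    have "\<not> b i \<le> a j"
      using nested[OF j(1) i(1)] j_right left_below_top[OF i] by simp
    then have "a j < b j"
      using bounds[OF i(1)] bj by linarith
    then have "b i \<le> a j \<or> b j \<le> a i"
      using open_intervals_disjoint_cases[OF disjoint_ab[OF i(1) j(1) \<open>i \<noteq> j\<close>] i(2)] by blast
    then show False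
      using \<open>\<not> b i \<le> a j\<close> bj bounds[OF i(1)] i(2) by linarith
  qed
  have j_left: "a j = 0 \<and> b j = e"
  proof (rule interval_cover_single_nondegenerate[OF countableI_type _ j(1) _ _ _ left_unique])
    show "{0..e} \<subseteq> (\<Union>k\<in>K. {a k..b k})"
      using cover_ab by simp
  qed (use bounds[OF j(1)] in auto)
  have "a k < b k \<or> c k < d k"
    using k bounds[OF k(1)] by auto
  then have "k = j"
    using left_unique right_unique k(1) by blast
  then show ?thesis
    using j_left j_right by simp
qed

lemma (in ordsum_partition) single_summand_if_left_central:
  assumes e: "0 < e" "e < 1"
    and left_central: "\<And>i. i \<in> K \<Longrightarrow> a i < b i \<Longrightarrow> b i = e \<and> c i = e"
    and right_above_bottom: "\<And>i. i \<in> K \<Longrightarrow> c i < d i \<Longrightarrow> 0 < b i"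
    and k: "k \<in> K" "\<not> (a k = b k \<and> c k = d k)"
  shows "a k = 0 \<and> b k = e \<and> c k = e \<and> d k = 1"
proof -
  interpret reflected: ordsum_partition "1 - e" K
      "\<lambda>k. 1 - d k" "\<lambda>k. 1 - c k" "\<lambda>k. 1 - b k" "\<lambda>k. 1 - a k"
    by (rule reflect)
  have "1 - d k = 0 \<and> 1 - c k = 1 - e \<and> 1 - b k = 1 - e \<and> 1 - a k = 1"
    by (rule reflected.single_summand_if_right_central) (use e left_central right_above_bottom k in auto)
  then show ?thesis
    by auto
qed

lemma uninorm_neutral_unique:
  assumes U: "uninorm U e" and e: "0 < e" "e < 1" and V: "uninorm V e'"
    and agree: "\<forall>x\<in>{0<..<1}. \<forall>y\<in>{0<..<1}. U x y = V x y"
  shows "e' = e"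
proof -
  have U_neutral: "U e x = x" if "x \<in> {0..1}" for x
    using U that unfolding uninorm_def by blast
  have V_neutral: "V e' x = x" if "x \<in> {0..1}" for x
    using V that unfolding uninorm_def by blast
  have V_comm: "V x y = V y x" if "x \<in> {0..1}" "y \<in> {0..1}" for x y
    using V that unfolding uninorm_def by blast
  have V_mono: "V x z \<le> V y z" if "x \<in> {0..1}" "y \<in> {0..1}" "z \<in> {0..1}" "x \<le> y" for x y z
    using V that unfolding uninorm_def by blast
  have "0 \<le> e'" "e' \<le> 1"
    using V unfolding uninorm_def by auto
  then consider "0 < e'" "e' < 1" | "e' = 0" | "e' = 1"
    by linarith
  then show ?thesis
  proof cases
    case 1
    have "e' = U e e'"
      using U_neutral 1 by simp
    also have "\<dots> = V e' e"
      using agree V_comm 1 e by simp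
    also have "\<dots> = e"
      using V_neutral e by simp
    finally show ?thesis .
  next
    case 2
    have "e = V 0 e"
      using V_neutral 2 e by simp
    also have "\<dots> \<le> V (e / 2) e"
      using V_mono e by simp
    also have "\<dots> = U e (e / 2)"
      using agree V_comm e by simp
    also have "\<dots> = e / 2"
      using U_neutral e by simp
    finally show ?thesis
      using e by simp
  next
    case 3
    have "(1 + e) / 2 = U e ((1 + e) / 2)"
      using U_neutral e by simp
    also have "\<dots> = V ((1 + e) / 2) e"
      using agree V_comm e by simp
    also have "\<dots> \<le> V 1 e"
      using V_mono e by simp
    also have "\<dots> = e"
      using V_neutral 3 e by simp
    finally show ?thesis
      using e by simp
  qed
qed

lemma in_class_Nmin_mixed_eq_min:
  assumes "uninorm U e" "0 < e" "e < 1" "in_class_Nmin U"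
    and "0 < x" "x < e" "e < y" "y < 1"
  shows "U y x = x"
proof -
  obtain V e' where V: "uninorm V e'"
    and V_min: "\<forall>x\<in>{0..1}. \<forall>y\<in>{0..1}.
      \<not> (x \<le> e' \<and> y \<le> e') \<and> \<not> (e' \<le> x \<and> e' \<le> y) \<longrightarrow> V x y = min x y"
    and agree: "\<forall>x\<in>{0<..<1}. \<forall>y\<in>{0<..<1}. U x y = V x y"
    using assms(4) unfolding in_class_Nmin_def in_class_Umin_def by blast
  have "e' = e"
    using uninorm_neutral_unique[OF assms(1-3) V agree] .
  then have "V y x = x"
    using V_min assms(5-8) by auto
  then show ?thesis
    using agree assms(2,5-8) by auto
qed

lemma in_class_Nmax_mixed_eq_max:
  assumes "uninorm U e" "0 < e" "e < 1" "in_class_Nmax U"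
    and "0 < x" "x < e" "e < y" "y < 1"
  shows "U x y = y"
proof -
  obtain V e' where V: "uninorm V e'"
    and V_max: "\<forall>x\<in>{0..1}. \<forall>y\<in>{0..1}.
      \<not> (x \<le> e' \<and> y \<le> e') \<and> \<not> (e' \<le> x \<and> e' \<le> y) \<longrightarrow> V x y = max x y"
    and agree: "\<forall>x\<in>{0<..<1}. \<forall>y\<in>{0<..<1}. U x y = V x y"
    using assms(4) unfolding in_class_Nmax_def in_class_Umax_def by blast
  have "e' = e"
    using uninorm_neutral_unique[OF assms(1-3) V agree] .
  then have "V x y = y"
    using V_max assms(5-8) by auto
  then show ?thesis
    using agree assms(2,5-8) by auto
qed

lemma in_class_U_continuous_on_upper:
  assumes "in_class_U U e" "e < 1"
  shows "continuous_on ({e..1} \<times> {e..1}) (\<lambda>(x, y). U x y)"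
proof -
  let ?s = "\<lambda>z. ((fst z - e) / (1 - e), (snd z - e) / (1 - e))"
  have tconorm: "continuous_on ({0..1} \<times> {0..1}) (\<lambda>(x, y). underlying_tconorm U e x y)"
    using assms(1) unfolding in_class_U_def by blast
  have "continuous_on ({e..1} \<times> {e..1}) ?s"
    using assms(2) by (auto intro!: continuous_intros)
  moreover have "?s ` ({e..1} \<times> {e..1}) \<subseteq> {0..1} \<times> {0..1}"
    using assms(2) by (auto simp: field_simps)
  ultimately have "continuous_on ({e..1} \<times> {e..1})
      (\<lambda>z. (\<lambda>(x, y). underlying_tconorm U e x y) (?s z))"
    by (rule continuous_on_compose2[OF tconorm])
  then have "continuous_on ({e..1} \<times> {e..1})
      (\<lambda>z. e + (1 - e) * (\<lambda>(x, y). underlying_tconorm U e x y) (?s z))"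
    by (intro continuous_on_add continuous_on_mult continuous_on_const)
  moreover have "e + (1 - e) * ((t - e) / (1 - e)) = t" for t
    using assms(2) by (simp add: field_simps)
  ultimately show ?thesis
    using assms(2) by (auto simp: underlying_tconorm_def case_prod_beta elim!: continuous_on_eq)
qed

lemma in_class_U_continuous_on_lower:
  assumes "in_class_U U e" "0 < e"
  shows "continuous_on ({0..e} \<times> {0..e}) (\<lambda>(x, y). U x y)"
proof -
  let ?s = "\<lambda>z. (fst z / e, snd z / e)"
  have tnorm: "continuous_on ({0..1} \<times> {0..1}) (\<lambda>(x, y). underlying_tnorm U e x y)"
    using assms(1) unfolding in_class_U_def by blast
  have "continuous_on ({0..e} \<times> {0..e}) ?s"
    using assms(2) by (auto intro!: continuous_intros)
  moreover have "?s ` ({0..e} \<times> {0..e}) \<subseteq> {0..1} \<times> {0..1}"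
    using assms(2) by (auto simp: field_simps)
  ultimately have "continuous_on ({0..e} \<times> {0..e})
      (\<lambda>z. (\<lambda>(x, y). underlying_tnorm U e x y) (?s z))"
    by (rule continuous_on_compose2[OF tnorm])
  then have "continuous_on ({0..e} \<times> {0..e})
      (\<lambda>z. e * (\<lambda>(x, y). underlying_tnorm U e x y) (?s z))"
    by (intro continuous_on_mult continuous_on_const)
  then show ?thesis
    using assms(2) by (auto simp: underlying_tnorm_def case_prod_beta elim!: continuous_on_eq)
qed

lemma idempotent_if_neutral_on:
  fixes U :: "real \<Rightarrow> real \<Rightarrow> real"
  assumes cont: "continuous_on (A \<times> A) (\<lambda>(x, y). U x y)" and "closed A" "T \<subseteq> A"
    and p: "p \<in> closure T" and neutral: "\<And>x. x \<in> T \<Longrightarrow> U x p = x"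
  shows "U p p = p"
proof -
  have closure_T: "closure T \<subseteq> A"
    using closure_minimal[OF assms(3,2)] .
  with p have "p \<in> A"
    by blast
  then have "continuous_on A (\<lambda>x. (\<lambda>(x, y). U x y) (x, p))"
    by (intro continuous_on_compose2[OF cont]) (auto intro: continuous_intros)
  then have "continuous_on (closure T) (\<lambda>x. U x p)"
    using closure_T by (simp add: continuous_on_subset)
  then have "continuous_on (closure T) (\<lambda>x. U x p - x)"
    by (intro continuous_intros)
  then have "U p p - p = 0"
    using continuous_constant_on_closure[of T "\<lambda>x. U x p - x" 0] neutral p by auto
  then show ?thesis
    by simp
qed

lemma is_ordinal_sum_middle_neutral:
  assumes "is_ordinal_sum U e K a b c d Uk ek" "k \<in> K"
    and "x \<in> {a k..d k} - {b k..c k}" "y \<in> {b k..c k}"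
  shows "U x y = x"
proof -
  have "\<forall>k\<in>K. \<forall>x\<in>{a k..d k} - {b k..c k}. \<forall>y\<in>{b k..c k}. U x y = x \<and> U y x = x"
    using assms(1) unfolding is_ordinal_sum_def Let_def by (elim conjE) assumption
  then show ?thesis
    using assms(2-4) by blast
qed

lemma (in ordsum_partition) right_summand_central_if_min:
  assumes os: "is_ordinal_sum U e K a b c d Uk ek"
    and min: "\<And>x y. 0 < x \<Longrightarrow> x < e \<Longrightarrow> e < y \<Longrightarrow> y < 1 \<Longrightarrow> U y x = x"
    and cont: "continuous_on ({e..1} \<times> {e..1}) (\<lambda>(x, y). U x y)"
    and no_idem: "\<And>x. e < x \<Longrightarrow> x < 1 \<Longrightarrow> U x x \<noteq> x"
    and i: "i \<in> K" "c i < d i"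
  shows "b i = e \<and> c i = e"
proof
  note bounds_i = bounds[OF i(1)]
  show "b i = e"
  proof (rule ccontr)
    assume "b i \<noteq> e"
    define x y where "x = (c i + d i) / 2" and "y = (b i + e) / 2"
    have "U x y = x"
      by (rule is_ordinal_sum_middle_neutral[OF os i(1)])
        (use bounds_i i(2) \<open>b i \<noteq> e\<close> in \<open>auto simp: x_def y_def\<close>)
    moreover have "U x y = y"
      by (rule min) (use bounds_i i(2) \<open>b i \<noteq> e\<close> in \<open>auto simp: x_def y_def\<close>)
    ultimately show False
      using bounds_i i(2) \<open>b i \<noteq> e\<close> by (auto simp: x_def y_def)
  qed
  show "c i = e"
  proof (rule ccontr)
    assume "c i \<noteq> e"
    have "U (c i) (c i) = c i"
    proof (rule idempotent_if_neutral_on[OF cont closed_atLeastAtMost])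
      show "{c i<..d i} \<subseteq> {e..1}" and "c i \<in> closure {c i<..d i}"
        using bounds_i i(2) by auto
      show "U x (c i) = x" if "x \<in> {c i<..d i}" for x
        by (rule is_ordinal_sum_middle_neutral[OF os i(1)]) (use bounds_i that in auto)
    qed
    then show False
      using no_idem bounds_i i(2) \<open>c i \<noteq> e\<close> by force
  qed
qed

lemma (in ordsum_partition) left_summand_below_top:
  assumes os: "is_ordinal_sum U e K a b c d Uk ek"
    and one: "\<And>x. 0 < x \<Longrightarrow> x \<le> 1 \<Longrightarrow> U x 1 = 1"
    and i: "i \<in> K" "a i < b i"
  shows "c i < 1"
proof (rule ccontr)
  assume "\<not> c i < 1"
  with bounds[OF i(1)] have "c i = 1"
    by linarith
  define x where "x = (a i + b i) / 2"
  have "U x 1 = x"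
    by (rule is_ordinal_sum_middle_neutral[OF os i(1)])
      (use bounds[OF i(1)] i(2) \<open>c i = 1\<close> in \<open>auto simp: x_def\<close>)
  moreover have "U x 1 = 1"
    by (rule one) (use bounds[OF i(1)] i(2) in \<open>auto simp: x_def\<close>)
  ultimately show False
    using bounds[OF i(1)] i(2) by (auto simp: x_def)
qed

lemma (in ordsum_partition) left_summand_central_if_max:
  assumes os: "is_ordinal_sum U e K a b c d Uk ek"
    and max: "\<And>x y. 0 < x \<Longrightarrow> x < e \<Longrightarrow> e < y \<Longrightarrow> y < 1 \<Longrightarrow> U x y = y"
    and cont: "continuous_on ({0..e} \<times> {0..e}) (\<lambda>(x, y). U x y)"
    and no_idem: "\<And>x. 0 < x \<Longrightarrow> x < e \<Longrightarrow> U x x \<noteq> x"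
    and i: "i \<in> K" "a i < b i"
  shows "b i = e \<and> c i = e"
proof
  note bounds_i = bounds[OF i(1)]
  show "b i = e"
  proof (rule ccontr)
    assume "b i \<noteq> e"
    have "U (b i) (b i) = b i"
    proof (rule idempotent_if_neutral_on[OF cont closed_atLeastAtMost])
      show "{a i..<b i} \<subseteq> {0..e}" and "b i \<in> closure {a i..<b i}"
        using bounds_i i(2) by auto
      show "U x (b i) = x" if "x \<in> {a i..<b i}" for x
        by (rule is_ordinal_sum_middle_neutral[OF os i(1)]) (use bounds_i that in auto)
    qed
    then show False
      using no_idem bounds_i i(2) \<open>b i \<noteq> e\<close> by force
  qed
  show "c i = e"
  proof (rule ccontr)
    assume "c i \<noteq> e"
    define x y where "x = (a i + b i) / 2" and "y = (c i + e) / 2"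
    have "U x y = x"
      by (rule is_ordinal_sum_middle_neutral[OF os i(1)])
        (use bounds_i i(2) \<open>c i \<noteq> e\<close> in \<open>auto simp: x_def y_def\<close>)
    moreover have "U x y = y"
      by (rule max) (use bounds_i i(2) \<open>c i \<noteq> e\<close> in \<open>auto simp: x_def y_def\<close>)
    ultimately show False
      using bounds_i i(2) \<open>c i \<noteq> e\<close> by (auto simp: x_def y_def)
  qed
qed

lemma (in ordsum_partition) right_summand_above_bottom:
  assumes os: "is_ordinal_sum U e K a b c d Uk ek"
    and zero: "\<And>x. 0 \<le> x \<Longrightarrow> x < 1 \<Longrightarrow> U x 0 = 0"
    and i: "i \<in> K" "c i < d i"
  shows "0 < b i"
proof (rule ccontr)
  assume "\<not> 0 < b i"
  with bounds[OF i(1)] have "b i = 0"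
    by linarith
  define x where "x = (c i + d i) / 2"
  have "U x 0 = x"
    by (rule is_ordinal_sum_middle_neutral[OF os i(1)])
      (use bounds[OF i(1)] i(2) \<open>b i = 0\<close> in \<open>auto simp: x_def\<close>)
  moreover have "U x 0 = 0"
    by (rule zero) (use bounds[OF i(1)] i(2) in \<open>auto simp: x_def\<close>)
  ultimately show False
    using bounds[OF i(1)] i(2) by (auto simp: x_def)
qed

lemma irreducible_os_if_Nmin:
  assumes "0 < e" "e < 1" and U: "in_class_U U e" and Nmin: "in_class_Nmin U"
    and no_idem: "\<forall>x. e < x \<and> x < 1 \<longrightarrow> \<not> idempotent_point U x"
  shows "irreducible_os U e"
  unfolding irreducible_os_def
proof (intro allI impI ballI)
  fix K a b c d Uk ek k
  assume "ordsum_data e K a b c d Uk ek \<and> is_ordinal_sum U e K a b c d Uk ek"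
    and k: "k \<in> K" "\<not> (a k = b k \<and> c k = d k)"
  then have os: "is_ordinal_sum U e K a b c d Uk ek" and partition: "ordsum_partition e K a b c d"
    using ordsum_data_partition by blast+
  interpret ordsum_partition e K a b c d
    by (fact partition)
  have uninorm: "uninorm U e"
    using U unfolding in_class_U_def by blast
  have one: "U x 1 = 1" if "0 < x" "x \<le> 1" for x
    using Nmin that unfolding in_class_Nmin_def in_class_N_def by blast
  show "a k = 0 \<and> b k = e \<and> c k = e \<and> d k = 1"
  proof (rule single_summand_if_right_central[OF assms(1,2) _ _ k])
    show "b i = e \<and> c i = e" if "i \<in> K" "c i < d i" for i
      using right_summand_central_if_min[OF os in_class_Nmin_mixed_eq_min[OF uninorm assms(1,2) Nmin]
          in_class_U_continuous_on_upper[OF U assms(2)] _ that] no_idem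
      unfolding idempotent_point_def by blast
    show "c i < 1" if "i \<in> K" "a i < b i" for i
      using left_summand_below_top[OF os one that] .
  qed
qed

lemma irreducible_os_if_Nmax:
  assumes "0 < e" "e < 1" and U: "in_class_U U e" and Nmax: "in_class_Nmax U"
    and no_idem: "\<forall>x. 0 < x \<and> x < e \<longrightarrow> \<not> idempotent_point U x"
  shows "irreducible_os U e"
  unfolding irreducible_os_def
proof (intro allI impI ballI)
  fix K a b c d Uk ek k
  assume "ordsum_data e K a b c d Uk ek \<and> is_ordinal_sum U e K a b c d Uk ek"
    and k: "k \<in> K" "\<not> (a k = b k \<and> c k = d k)"
  then have os: "is_ordinal_sum U e K a b c d Uk ek" and partition: "ordsum_partition e K a b c d"
    using ordsum_data_partition by blast+
  interpret ordsum_partition e K a b c d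
    by (fact partition)
  have uninorm: "uninorm U e"
    using U unfolding in_class_U_def by blast
  have zero: "U x 0 = 0" if "0 \<le> x" "x < 1" for x
    using Nmax that unfolding in_class_Nmax_def in_class_N_def by blast
  show "a k = 0 \<and> b k = e \<and> c k = e \<and> d k = 1"
  proof (rule single_summand_if_left_central[OF assms(1,2) _ _ k])
    show "b i = e \<and> c i = e" if "i \<in> K" "a i < b i" for i
      using left_summand_central_if_max[OF os in_class_Nmax_mixed_eq_max[OF uninorm assms(1,2) Nmax]
          in_class_U_continuous_on_lower[OF U assms(1)] _ that] no_idem
      unfolding idempotent_point_def by blast
    show "0 < b i" if "i \<in> K" "c i < d i" for i
      using right_summand_above_bottom[OF os zero that] .
  qed
qed

theorem proposition9:
  fixes U :: "real \<Rightarrow> real \<Rightarrow> real" and e :: real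
  assumes "uninorm U e" and "0 < e" and "e < 1"
    and "in_class_U U e"
    and "(in_class_Nmin U \<and> (\<forall>x. e < x \<and> x < 1 \<longrightarrow> \<not> idempotent_point U x)) \<or>
         (in_class_Nmax U \<and> (\<forall>x. 0 < x \<and> x < e \<longrightarrow> \<not> idempotent_point U x))"
  shows "irreducible_os U e"
  using assms(5) irreducible_os_if_Nmin[OF assms(2-4)] irreducible_os_if_Nmax[OF assms(2-4)]
  by blast

end
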